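(* In the MHAV setting described in the context, with $Y$, $f$, $\Lambda$ and $\phi_Y$ fixed, the diameter $D$ of $\bar P_{\mathrm{MH}}$ does not depend on the parameters $\alpha'\in(0,1)$ and $\alpha,\beta\in(0,1)$ with $\alpha+\beta<1$.
   Context: MHAV setting: $Y$ is a finite nonempty set, $f:Y\to\mathbb{R}$; $\Lambda=\{\lambda_1<\dots<\lambda_n\}$ positive reals, $n\ge2$; $\bar\Pi(\lambda,y)=\lambda^{-f(y)}/Z$ on $\Lambda\times Y$, $Z=\sum_{\lambda,y}\lambda^{-f(y)}$. $\phi_Y$ is an irreducible Markov kernel on $Y$. For $\alpha'\in(0,1)$: $\phi_\Lambda(\lambda_1,\lambda_2)=1$, $\phi_\Lambda(\lambda_n,\lambda_{n-1})=1$, and for $1<i<n$, $\phi_\Lambda(\lambda_i,\lambda_{i+1})=\alpha'$, $\phi_\Lambda(\lambda_i,\lambda_{i-1})=1-\alpha'$, other entries $0$. $\bar\phi[(\lambda,y),(\lambda',y')]=\alpha\phi_\Lambda(\lambda,\lambda')$ if $\lambda\ne\lambda',y=y'$; $\beta\phi_Y(y,y')$ if $\lambda=\lambda',y\ne y'$; $(1-\alpha-\beta)+\beta\phi_Y(y,y)$ if $(\lambda,y)=(\lambda',y')$; $0$ otherwise. $\bar{\mathsf{Acc}}(x,x')=\min\{1,\frac{\bar\phi(x',x)\bar\Pi(x')}{\bar\phi(x,x')\bar\Pi(x)}\}$; $\bar P_{\mathrm{MH}}(x,x')=\bar\phi(x,x')\bar{\mathsf{Acc}}(x,x')$ for $x\ne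 x'$, $\bar P_{\mathrm{MH}}(x,x)=1-\sum_{x'\ne x}\bar P_{\mathrm{MH}}(x,x')$. The diameter is $D=\min\{l:\ \bar P^l_{\mathrm{MH}}(x,x')>0\text{ for all }x,x'\in\Lambda\times Y\}$ (with $\bar P^l_{\mathrm{MH}}$ the $l$-step transition probabilities), understood as $+\infty$ if the set is empty. *)

theory Defs
  imports Complex_Main "HOL-Library.Extended_Nat"
begin

text \<open>Temperature ladder: \<Lambda> = {lam 0 < ... < lam (n-1)} (0-based indexing of
  lambda_1 < ... < lambda_n).  State space of the augmented chain: \<Lambda> \<times> Y.\<close>

definition Lset :: "(nat \<Rightarrow> real) \<Rightarrow> nat \<Rightarrow> real set" where
  "Lset lam n = lam ` {0..<n}"

definition stspace :: "(nat \<Rightarrow> real) \<Rightarrow> nat \<Rightarrow> 'a set \<Rightarrow> (real \<times> 'a) set" where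
  "stspace lam n Y = Lset lam n \<times> Y"

definition phiL :: "(nat \<Rightarrow> real) \<Rightarrow> nat \<Rightarrow> real \<Rightarrow> real \<Rightarrow> real \<Rightarrow> real" where
  "phiL lam n a' l l' =
     (if l = lam 0 \<and> l' = lam 1 then 1
      else if l = lam (n - 1) \<and> l' = lam (n - 2) then 1
      else if \<exists>i. 0 < i \<and> i < n - 1 \<and> l = lam i \<and> l' = lam (i + 1) then a'
      else if \<exists>i. 0 < i \<and> i < n - 1 \<and> l = lam i \<and> l' = lam (i - 1) then 1 - a'
      else 0)"

definition Zc :: "(nat \<Rightarrow> real) \<Rightarrow> nat \<Rightarrow> 'a set \<Rightarrow> ('a \<Rightarrow> real) \<Rightarrow> real" where
  "Zc lam n Y f = (\<Sum>x\<in>stspace lam n Y. fst x powr (- f (snd x)))"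

definition Pibar :: "(nat \<Rightarrow> real) \<Rightarrow> nat \<Rightarrow> 'a set \<Rightarrow> ('a \<Rightarrow> real) \<Rightarrow> real \<times> 'a \<Rightarrow> real" where
  "Pibar lam n Y f x = fst x powr (- f (snd x)) / Zc lam n Y f"

definition phibar :: "(nat \<Rightarrow> real) \<Rightarrow> nat \<Rightarrow> ('a \<Rightarrow> 'a \<Rightarrow> real) \<Rightarrow> real \<Rightarrow> real \<Rightarrow> real
      \<Rightarrow> real \<times> 'a \<Rightarrow> real \<times> 'a \<Rightarrow> real" where
  "phibar lam n phiY a' a b x x' =
     (let (l, y) = x; (l', y') = x' in
      if l \<noteq> l' \<and> y = y' then a * phiL lam n a' l l'
      else if l = l' \<and> y \<noteq> y' then b * phiY y y'
      else if l = l' \<and> y = y' then (1 - a - b) + b * phiY y y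
      else 0)"

definition Accbar :: "(nat \<Rightarrow> real) \<Rightarrow> nat \<Rightarrow> 'a set \<Rightarrow> ('a \<Rightarrow> real) \<Rightarrow> ('a \<Rightarrow> 'a \<Rightarrow> real)
      \<Rightarrow> real \<Rightarrow> real \<Rightarrow> real \<Rightarrow> real \<times> 'a \<Rightarrow> real \<times> 'a \<Rightarrow> real" where
  "Accbar lam n Y f phiY a' a b x x' =
     min 1 ((phibar lam n phiY a' a b x' x * Pibar lam n Y f x') /
            (phibar lam n phiY a' a b x x' * Pibar lam n Y f x))"

definition PMH :: "(nat \<Rightarrow> real) \<Rightarrow> nat \<Rightarrow> 'a set \<Rightarrow> ('a \<Rightarrow> real) \<Rightarrow> ('a \<Rightarrow> 'a \<Rightarrow> real)
      \<Rightarrow> real \<Rightarrow> real \<Rightarrow> real \<Rightarrow> real \<times> 'a \<Rightarrow> real \<times> 'a \<Rightarrow> real" where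
  "PMH lam n Y f phiY a' a b x x' =
     (if x \<noteq> x' then phibar lam n phiY a' a b x x' * Accbar lam n Y f phiY a' a b x x'
      else 1 - (\<Sum>z\<in>stspace lam n Y - {x}.
                  phibar lam n phiY a' a b x z * Accbar lam n Y f phiY a' a b x z))"

fun kpow :: "('s \<Rightarrow> 's \<Rightarrow> real) \<Rightarrow> 's set \<Rightarrow> nat \<Rightarrow> 's \<Rightarrow> 's \<Rightarrow> real" where
  "kpow P S 0 x x' = (if x = x' then 1 else 0)"
| "kpow P S (Suc l) x x' = (\<Sum>z\<in>S. kpow P S l x z * P z x')"

definition diameter :: "('s \<Rightarrow> 's \<Rightarrow> real) \<Rightarrow> 's set \<Rightarrow> enat" where
  "diameter P S =
     (if \<exists>l. \<forall>x\<in>S. \<forall>x'\<in>S. kpow P S l x x' > 0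
      then enat (LEAST l. \<forall>x\<in>S. \<forall>x'\<in>S. kpow P S l x x' > 0) else \<infinity>)"

definition markov_kernel_on :: "'a set \<Rightarrow> ('a \<Rightarrow> 'a \<Rightarrow> real) \<Rightarrow> bool" where
  "markov_kernel_on Y K \<longleftrightarrow> (\<forall>y\<in>Y. \<forall>y'\<in>Y. K y y' \<ge> 0) \<and> (\<forall>y\<in>Y. (\<Sum>y'\<in>Y. K y y') = 1)"

definition irreducible_on :: "'a set \<Rightarrow> ('a \<Rightarrow> 'a \<Rightarrow> real) \<Rightarrow> bool" where
  "irreducible_on Y K \<longleftrightarrow> (\<forall>y\<in>Y. \<forall>y'\<in>Y. \<exists>t. kpow K Y t y y' > 0)"

definition MHdiam :: "(nat \<Rightarrow> real) \<Rightarrow> nat \<Rightarrow> 'a set \<Rightarrow> ('a \<Rightarrow> real) \<Rightarrow> ('a \<Rightarrow> 'a \<Rightarrow> real)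
      \<Rightarrow> real \<Rightarrow> real \<Rightarrow> real \<Rightarrow> enat" where
  "MHdiam lam n Y f phiY a' a b =
     diameter (PMH lam n Y f phiY a' a b) (stspace lam n Y)"

end

theory Submission
  imports Defs
begin

text \<open>The diameter only depends on which entries of the kernel are positive: by induction
  on l, so does the positivity pattern of the l-step kernel.  For the Metropolis--Hastings kernel
  that pattern does not depend on the parameters.  Off the diagonal, a move from x to x' is
  possible iff both proposals x \<rightarrow> x' and x' \<rightarrow> x are possible (the target is everywhere
  positive), and whether a proposal is possible only depends on the supports of the proposal
  kernels on \<Lambda> and Y.  On the diagonal the kernel is always positive, because the proposals
  leave the current state with probability at most \<alpha> + \<beta> < 1.\<close>

lemma kpow_nonneg:
  assumes "\<forall>x\<in>S. \<forall>y\<in>S. 0 \<le> P x y" and "x' \<in> S"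
  shows "0 \<le> kpow P S l x x'"
  using assms(2)
proof (induction l arbitrary: x')
  case (Suc l)
  then show ?case using assms(1) by (auto intro!: sum_nonneg mult_nonneg_nonneg)
qed simp

lemma sum_pos_iff_ex_pos:
  fixes g :: "'b \<Rightarrow> 'c::linordered_ab_group_add"
  assumes "finite S" and "\<forall>z\<in>S. 0 \<le> g z"
  shows "0 < sum g S \<longleftrightarrow> (\<exists>z\<in>S. 0 < g z)"
proof -
  have "0 < sum g S \<longleftrightarrow> sum g S \<noteq> 0"
    using sum_nonneg[of S g] assms(2) by (auto simp: order_less_le)
  also have "\<dots> \<longleftrightarrow> \<not> (\<forall>z\<in>S. g z = 0)"
    using sum_nonneg_eq_0_iff[OF assms(1)] assms(2) by blast
  also have "\<dots> \<longleftrightarrow> (\<exists>z\<in>S. 0 < g z)"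
    using assms(2) by (auto simp: order_less_le)
  finally show ?thesis .
qed

lemma kpow_Suc_pos_iff:
  assumes "finite S" and P: "\<forall>x\<in>S. \<forall>y\<in>S. 0 \<le> P x y" and x': "x' \<in> S"
  shows "0 < kpow P S (Suc l) x x' \<longleftrightarrow> (\<exists>z\<in>S. 0 < kpow P S l x z \<and> 0 < P z x')"
proof -
  have factors_nonneg: "0 \<le> kpow P S l x z" "0 \<le> P z x'" if "z \<in> S" for z
    using that x' P kpow_nonneg[OF P] by auto
  then have "0 < kpow P S (Suc l) x x' \<longleftrightarrow> (\<exists>z\<in>S. 0 < kpow P S l x z * P z x')"
    by (simp add: sum_pos_iff_ex_pos[OF assms(1)])
  also have "\<dots> \<longleftrightarrow> (\<exists>z\<in>S. 0 < kpow P S l x z \<and> 0 < P z x')"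
    using factors_nonneg by (auto simp: zero_less_mult_iff order_less_le)
  finally show ?thesis .
qed

lemma kpow_pos_iff_of_pos_iff:
  assumes "finite S"
    and P: "\<forall>x\<in>S. \<forall>y\<in>S. 0 \<le> P x y" and Q: "\<forall>x\<in>S. \<forall>y\<in>S. 0 \<le> Q x y"
    and PQ: "\<forall>x\<in>S. \<forall>y\<in>S. 0 < P x y \<longleftrightarrow> 0 < Q x y"
    and "x' \<in> S"
  shows "0 < kpow P S l x x' \<longleftrightarrow> 0 < kpow Q S l x x'"
  using assms(5)
proof (induction l arbitrary: x')
  case (Suc l)
  have "0 < kpow P S (Suc l) x x' \<longleftrightarrow> (\<exists>z\<in>S. 0 < kpow P S l x z \<and> 0 < P z x')"
    by (rule kpow_Suc_pos_iff[OF assms(1) P Suc.prems])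
  also have "\<dots> \<longleftrightarrow> (\<exists>z\<in>S. 0 < kpow Q S l x z \<and> 0 < Q z x')"
    using PQ Suc.prems by (intro bex_cong conj_cong) (simp_all add: Suc.IH)
  also have "\<dots> \<longleftrightarrow> 0 < kpow Q S (Suc l) x x'"
    by (rule kpow_Suc_pos_iff[OF assms(1) Q Suc.prems, symmetric])
  finally show ?case .
qed simp

lemma diameter_eq_of_pos_iff:
  assumes "finite S"
    and "\<forall>x\<in>S. \<forall>y\<in>S. 0 \<le> P x y" and "\<forall>x\<in>S. \<forall>y\<in>S. 0 \<le> Q x y"
    and "\<forall>x\<in>S. \<forall>y\<in>S. 0 < P x y \<longleftrightarrow> 0 < Q x y"
  shows "diameter P S = diameter Q S"
proof -
  have "\<And>l. (\<forall>x\<in>S. \<forall>x'\<in>S. 0 < kpow P S l x x') \<longleftrightarrow> (\<forall>x\<in>S. \<forall>x'\<in>S. 0 < kpow Q S l x x')"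
    using kpow_pos_iff_of_pos_iff[OF assms] by blast
  then show ?thesis unfolding diameter_def by simp
qed

lemma phiL_lam_lam:
  assumes n: "n \<ge> 2" and sm: "strict_mono_on {0..<n} lam" and i: "i < n" and j: "j < n"
  shows "phiL lam n a' (lam i) (lam j) =
     (if j = i + 1 then (if i = 0 then 1 else if i = n - 1 then 0 else a') else 0)
   + (if j + 1 = i then (if i = n - 1 then 1 else if i = 0 then 0 else 1 - a') else 0)"
proof -
  have inj: "\<And>p q. p < n \<Longrightarrow> q < n \<Longrightarrow> lam p = lam q \<longleftrightarrow> p = q"
    using sm by (metis atLeastLessThan_iff le0 strict_mono_on_eqD)
  have up: "(\<exists>k. 0 < k \<and> k < n - 1 \<and> lam i = lam k \<and> lam j = lam (k + 1))
      \<longleftrightarrow> (0 < i \<and> i < n - 1 \<and> j = i + 1)"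
    using inj i j by (metis add_lessD1 less_diff_conv)
  have down: "(\<exists>k. 0 < k \<and> k < n - 1 \<and> lam i = lam k \<and> lam j = lam (k - 1))
      \<longleftrightarrow> (0 < i \<and> i < n - 1 \<and> j + 1 = i)"
  proof
    assume "\<exists>k. 0 < k \<and> k < n - 1 \<and> lam i = lam k \<and> lam j = lam (k - 1)"
    then obtain k where k: "0 < k" "k < n - 1" "lam i = lam k" "lam j = lam (k - 1)" by blast
    then have "i = k" "j = k - 1" using inj i j by auto
    then show "0 < i \<and> i < n - 1 \<and> j + 1 = i" using k by auto
  next
    assume "0 < i \<and> i < n - 1 \<and> j + 1 = i"
    then show "\<exists>k. 0 < k \<and> k < n - 1 \<and> lam i = lam k \<and> lam j = lam (k - 1)"
      by (intro exI[of _ i]) auto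
  qed
  have ends: "lam i = lam 0 \<longleftrightarrow> i = 0" "lam j = lam 1 \<longleftrightarrow> j = 1"
    "lam i = lam (n - 1) \<longleftrightarrow> i = n - 1" "lam j = lam (n - 2) \<longleftrightarrow> j = n - 2"
    using inj i j n by auto
  show ?thesis unfolding phiL_def up down ends using n i j by auto
qed

lemma phiL_nonneg: "0 \<le> a' \<Longrightarrow> a' \<le> 1 \<Longrightarrow> 0 \<le> phiL lam n a' l l'"
  by (simp add: phiL_def)

lemma phiL_pos_iff_phiL_pos:
  assumes "0 < a1'" "a1' < 1" "0 < a2'" "a2' < 1"
  shows "0 < phiL lam n a1' l l' \<longleftrightarrow> 0 < phiL lam n a2' l l'"
  using assms unfolding phiL_def by auto

lemma phiL_row_sum:
  assumes n: "n \<ge> 2" and sm: "strict_mono_on {0..<n} lam" and i: "i < n"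
  shows "(\<Sum>l'\<in>Lset lam n. phiL lam n a' (lam i) l') = 1"
proof -
  have "inj_on lam {0..<n}" using sm strict_mono_on_imp_inj_on by blast
  then have "(\<Sum>l'\<in>Lset lam n. phiL lam n a' (lam i) l') = (\<Sum>j<n. phiL lam n a' (lam i) (lam j))"
    unfolding Lset_def by (simp add: sum.reindex atLeast0LessThan)
  also have "\<dots> = (\<Sum>j<n. (if j = i + 1 then (if i = 0 then 1 else if i = n - 1 then 0 else a') else 0)
      + (if j = i - 1 then (if 0 < i then (if i = n - 1 then 1 else 1 - a') else 0) else 0))"
    by (rule sum.cong) (auto simp: phiL_lam_lam[OF n sm i])
  also have "\<dots> = 1"
    using n i by (auto simp: sum.distrib)
  finally show ?thesis .
qed

lemma mem_stspace_iff: "x \<in> stspace lam n Y \<longleftrightarrow> (\<exists>i<n. fst x = lam i) \<and> snd x \<in> Y"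
  by (cases x) (auto simp: stspace_def Lset_def)

lemma finite_stspace: "finite Y \<Longrightarrow> finite (stspace lam n Y)"
  by (simp add: stspace_def Lset_def)

lemma phibar_pos_iff_phibar_pos:
  assumes "x \<noteq> x'"
    and "0 < a1'" "a1' < 1" "0 < a1" "0 < b1" and "0 < a2'" "a2' < 1" "0 < a2" "0 < b2"
  shows "0 < phibar lam n phiY a1' a1 b1 x x' \<longleftrightarrow> 0 < phibar lam n phiY a2' a2 b2 x x'"
  using assms phiL_pos_iff_phiL_pos[of a1' a2' lam n "fst x" "fst x'"]
  by (cases x; cases x') (auto simp: phibar_def zero_less_mult_iff)

context
  fixes Y :: "'a set" and f :: "'a \<Rightarrow> real" and lam :: "nat \<Rightarrow> real" and n :: nat
    and phiY :: "'a \<Rightarrow> 'a \<Rightarrow> real" and a' a b :: real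
  assumes fin: "finite Y" and ne: "Y \<noteq> {}" and n: "n \<ge> 2"
    and sm: "strict_mono_on {0..<n} lam" and lpos: "\<forall>i<n. lam i > 0"
    and mk: "markov_kernel_on Y phiY"
    and a': "0 < a'" "a' < 1" and ab: "0 < a" "0 < b" "a + b < 1"
begin

lemma Zc_pos: "0 < Zc lam n Y f"
proof -
  obtain y where "y \<in> Y" using ne by blast
  then have "(lam 0, y) \<in> stspace lam n Y" using n by (force simp: mem_stspace_iff)
  moreover have "0 < fst x powr - f (snd x)" if "x \<in> stspace lam n Y" for x
    using that lpos by (auto simp: mem_stspace_iff)
  ultimately show ?thesis
    unfolding Zc_def using finite_stspace[OF fin] by (intro sum_pos) auto
qed

lemma Pibar_pos: "x \<in> stspace lam n Y \<Longrightarrow> 0 < Pibar lam n Y f x"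
  unfolding Pibar_def using Zc_pos lpos by (auto simp: mem_stspace_iff)

lemma phiY_nonneg: "y \<in> Y \<Longrightarrow> y' \<in> Y \<Longrightarrow> 0 \<le> phiY y y'"
  using mk by (simp add: markov_kernel_on_def)

lemma phibar_nonneg:
  "x \<in> stspace lam n Y \<Longrightarrow> x' \<in> stspace lam n Y \<Longrightarrow> 0 \<le> phibar lam n phiY a' a b x x'"
  using phiY_nonneg[of "snd x" "snd x'"] phiY_nonneg[of "snd x" "snd x"]
    phiL_nonneg[of a' lam n "fst x" "fst x'"] a' ab
  by (cases x; cases x') (auto simp: phibar_def mem_stspace_iff)

lemma PMH_pos_iff_off_diag:
  assumes x: "x \<in> stspace lam n Y" and x': "x' \<in> stspace lam n Y" and "x \<noteq> x'"
  shows "0 < PMH lam n Y f phiY a' a b x x' \<longleftrightarrow>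
    0 < phibar lam n phiY a' a b x x' \<and> 0 < phibar lam n phiY a' a b x' x"
proof -
  have phibar_nonneg: "0 \<le> phibar lam n phiY a' a b x x'" "0 \<le> phibar lam n phiY a' a b x' x"
    using phibar_nonneg x x' by auto
  have "0 < Pibar lam n Y f x" "0 < Pibar lam n Y f x'"
    using Pibar_pos x x' by auto
  then have "0 < Accbar lam n Y f phiY a' a b x x' \<longleftrightarrow> 0 < phibar lam n phiY a' a b x' x"
    if "0 < phibar lam n phiY a' a b x x'"
    using that phibar_nonneg
    by (auto simp: Accbar_def zero_less_divide_iff zero_less_mult_iff mult_less_0_iff)
  then show ?thesis
    using \<open>x \<noteq> x'\<close> phibar_nonneg by (auto simp: PMH_def zero_less_mult_iff)
qed

lemma phibar_off_diag_sum_le: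
  assumes "(l, y) \<in> stspace lam n Y"
  shows "(\<Sum>z\<in>stspace lam n Y - {(l, y)}. phibar lam n phiY a' a b (l, y) z) \<le> a + b"
proof -
  let ?p = "phibar lam n phiY a' a b (l, y)"
  define moves_\<Lambda> where "moves_\<Lambda> = (\<lambda>l'. (l', y)) ` (Lset lam n - {l})"
  define moves_Y where "moves_Y = Pair l ` (Y - {y})"
  obtain i where i: "i < n" "l = lam i" and y: "y \<in> Y"
    using assms by (auto simp: mem_stspace_iff)
  have finite_Lset: "finite (Lset lam n)" by (simp add: Lset_def)
  have "(\<Sum>z\<in>stspace lam n Y - {(l, y)}. ?p z) = (\<Sum>z\<in>moves_\<Lambda> \<union> moves_Y. ?p z)"
  proof (rule sum.mono_neutral_right)
    show "finite (stspace lam n Y - {(l, y)})"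
      using finite_stspace[OF fin] by simp
    show "moves_\<Lambda> \<union> moves_Y \<subseteq> stspace lam n Y - {(l, y)}"
      using assms by (auto simp: moves_\<Lambda>_def moves_Y_def stspace_def)
    show "\<forall>z\<in>stspace lam n Y - {(l, y)} - (moves_\<Lambda> \<union> moves_Y). ?p z = 0"
    proof
      fix z assume z: "z \<in> stspace lam n Y - {(l, y)} - (moves_\<Lambda> \<union> moves_Y)"
      obtain l' y' where z_eq: "z = (l', y')" by (cases z)
      have "l' \<in> Lset lam n" "y' \<in> Y"
        using z z_eq by (auto simp: stspace_def)
      then have "l' \<noteq> l" "y' \<noteq> y"
        using z z_eq by (auto simp: moves_\<Lambda>_def moves_Y_def)
      then show "?p z = 0"
        using z_eq by (simp add: phibar_def)
    qed
  qed
  also have "\<dots> = (\<Sum>z\<in>moves_\<Lambda>. ?p z) + (\<Sum>z\<in>moves_Y. ?p z)"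
    by (rule sum.union_disjoint) (auto simp: moves_\<Lambda>_def moves_Y_def finite_Lset fin)
  also have "(\<Sum>z\<in>moves_\<Lambda>. ?p z) = a * (\<Sum>l'\<in>Lset lam n - {l}. phiL lam n a' l l')"
    unfolding moves_\<Lambda>_def
    by (subst sum.reindex) (auto simp: inj_on_def phibar_def sum_distrib_left)
  also have "(\<Sum>z\<in>moves_Y. ?p z) = b * (\<Sum>y'\<in>Y - {y}. phiY y y')"
    unfolding moves_Y_def
    by (subst sum.reindex)
      (auto simp: inj_on_def phibar_def sum_distrib_left split: if_splits intro!: sum.cong)
  also have "(\<Sum>l'\<in>Lset lam n - {l}. phiL lam n a' l l') \<le> (\<Sum>l'\<in>Lset lam n. phiL lam n a' l l')"
    using a' by (intro sum_mono2) (auto simp: finite_Lset phiL_nonneg)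
  also have "\<dots> = 1"
    using phiL_row_sum[OF n sm i(1)] i(2) by simp
  also have "(\<Sum>y'\<in>Y - {y}. phiY y y') \<le> (\<Sum>y'\<in>Y. phiY y y')"
    using y by (intro sum_mono2) (auto simp: fin phiY_nonneg)
  also have "\<dots> = 1"
    using mk y by (simp add: markov_kernel_on_def)
  finally show ?thesis
    using ab by simp
qed

lemma PMH_diag_pos:
  assumes x: "x \<in> stspace lam n Y"
  shows "0 < PMH lam n Y f phiY a' a b x x"
proof -
  let ?S = "stspace lam n Y"
  have "(\<Sum>z\<in>?S - {x}. phibar lam n phiY a' a b x z * Accbar lam n Y f phiY a' a b x z)
      \<le> (\<Sum>z\<in>?S - {x}. phibar lam n phiY a' a b x z)"
    using x phibar_nonneg by (intro sum_mono mult_left_le) (auto simp: Accbar_def)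
  also have "\<dots> \<le> a + b"
    using phibar_off_diag_sum_le[of "fst x" "snd x"] x by simp
  finally show ?thesis
    using ab by (simp add: PMH_def)
qed

lemma PMH_nonneg:
  assumes x: "x \<in> stspace lam n Y" and x': "x' \<in> stspace lam n Y"
  shows "0 \<le> PMH lam n Y f phiY a' a b x x'"
proof (cases "x = x'")
  case True
  then show ?thesis using PMH_diag_pos[OF x] by simp
next
  case False
  have "0 \<le> Accbar lam n Y f phiY a' a b x x'"
    using phibar_nonneg Pibar_pos x x' by (simp add: Accbar_def less_imp_le)
  then show ?thesis
    using False phibar_nonneg[OF x x'] by (simp add: PMH_def)
qed

lemma PMH_pos_iff:
  "x \<in> stspace lam n Y \<Longrightarrow> x' \<in> stspace lam n Y \<Longrightarrow> 0 < PMH lam n Y f phiY a' a b x x' \<longleftrightarrow>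
    x = x' \<or> (0 < phibar lam n phiY a' a b x x' \<and> 0 < phibar lam n phiY a' a b x' x)"
  using PMH_diag_pos[of x] PMH_pos_iff_off_diag[of x x'] by (cases "x = x'") auto

end

theorem lemma17:
  fixes Y :: "'a set" and f :: "'a \<Rightarrow> real" and lam :: "nat \<Rightarrow> real" and n :: nat
    and phiY :: "'a \<Rightarrow> 'a \<Rightarrow> real"
    and a1' a1 b1 a2' a2 b2 :: real
  assumes "finite Y" and "Y \<noteq> {}"
    and "n \<ge> 2"
    and "strict_mono_on {0..<n} lam" and "\<forall>i<n. lam i > 0"
    and "markov_kernel_on Y phiY" and "irreducible_on Y phiY"
    and "0 < a1'" "a1' < 1" "0 < a1" "a1 < 1" "0 < b1" "b1 < 1" "a1 + b1 < 1"
    and "0 < a2'" "a2' < 1" "0 < a2" "a2 < 1" "0 < b2" "b2 < 1" "a2 + b2 < 1"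
  shows "MHdiam lam n Y f phiY a1' a1 b1 = MHdiam lam n Y f phiY a2' a2 b2"
  unfolding MHdiam_def
proof (rule diameter_eq_of_pos_iff)
  show "finite (stspace lam n Y)"
    using \<open>finite Y\<close> by (rule finite_stspace)
  show "\<forall>x\<in>stspace lam n Y. \<forall>x'\<in>stspace lam n Y. 0 \<le> PMH lam n Y f phiY a1' a1 b1 x x'"
    using PMH_nonneg[of Y n lam phiY a1' a1 b1] assms by blast
  show "\<forall>x\<in>stspace lam n Y. \<forall>x'\<in>stspace lam n Y. 0 \<le> PMH lam n Y f phiY a2' a2 b2 x x'"
    using PMH_nonneg[of Y n lam phiY a2' a2 b2] assms by blast
  show "\<forall>x\<in>stspace lam n Y. \<forall>x'\<in>stspace lam n Y.
      0 < PMH lam n Y f phiY a1' a1 b1 x x' \<longleftrightarrow> 0 < PMH lam n Y f phiY a2' a2 b2 x x'"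
    using PMH_pos_iff[of Y n lam phiY a1' a1 b1] PMH_pos_iff[of Y n lam phiY a2' a2 b2]
      phibar_pos_iff_phibar_pos[of _ _ a1' a1 b1 a2' a2 b2] assms
    by (metis (no_types, lifting))
qed

end
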